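(* Fix $J\ge 2$ and sample sizes $n_1,\ldots,n_J$ with $\min_j n_j\ge 2$. For each dimension $d$, let $F_1,\ldots,F_J$ be distributions on $\mathbb{R}^d$ with finite second moments, means $\boldsymbol{\mu}_j$ and covariance matrices $\boldsymbol{\Sigma}_j$, satisfying assumptions (A1) and (A2) stated in the context. Let $\mathbf{X}_{j1},\ldots,\mathbf{X}_{jn_j}\overset{iid}{\sim}F_j$, $j=1,\ldots,J$, be independent collections, let $\overline{\mathbf{X}}_j=n_j^{-1}\sum_{i=1}^{n_j}\mathbf{X}_{ji}$, and define the empirical (squared) Mahalanobis distances computed with the identity matrix, $\widehat\delta_j(\mathbf{x})=\|\mathbf{x}-\overline{\mathbf{X}}_j\|^2$, and $\widehat\Delta(\mathbf{x})=(\widehat\delta_1(\mathbf{x}),\ldots,\widehat\delta_J(\mathbf{x}))$. Then, as $d\to\infty$: (a) for every $j$ and $i=1,\ldots,n_j$, $d^{-1}\widehat\Delta(\mathbf{X}_{ji})\overset{P}{\to}\Theta_j=(\theta_{j1},\ldots,\theta_{jJ})$, where $\theta_{jj}=(1-1/n_j)\sigma_j^2$ and $\theta_{jk}=\nu_{jk}^2+\sigma_j^2+\sigma_k^2/n_k$ for $k\ne j$; (b) for an observation $\mathbf{Z}\sim F_i$ independent of the samples, $d^{-1}\widehat\Delta(\mathbf{Z})\overset{P}{\to}\Theta_i^{*}=(\theta^*_{i1},\ldots,\theta^*_{iJ})$, where $\theta^*_{ii}=(1+1/n_i)\sigma_i^2$ and $\theta^*_{ik}=\nu_{ik}^2+\sigma_i^2+\sigma_k^2/n_k$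 for $k\ne i$.
   Context: Assumption (A1): for all $1\le j,j'\le J$ and independent random vectors $\mathbf{X}\sim F_j$ and $\mathbf{Y},\mathbf{Z}\sim F_{j'}$ (with coordinates $X_i,Y_i,Z_i$), as $d\to\infty$, $\big|d^{-1}\sum_{i=1}^d(X_i-Y_i)(X_i-Z_i)-E\{d^{-1}\sum_{i=1}^d(X_i-Y_i)(X_i-Z_i)\}\big|\overset{P}{\to}0$ and $\big|d^{-1}\sum_{i=1}^d(X_i-Y_i)^2-E\{d^{-1}\sum_{i=1}^d(X_i-Y_i)^2\}\big|\overset{P}{\to}0$. Assumption (A2): for each $j$ there is a constant $\sigma_j^2$ with $d^{-1}\mathrm{trace}(\boldsymbol{\Sigma}_j)\to\sigma_j^2$, and for each $j\ne j'$ there is a constant $\nu_{jj'}^2$ with $d^{-1}\|\boldsymbol{\mu}_j-\boldsymbol{\mu}_{j'}\|^2\to\nu_{jj'}^2$, as $d\to\infty$. The sample sizes $n_j$ stay fixed as $d\to\infty$. *)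

theory Defs
  imports "HOL-Probability.Probability"
begin

text \<open>Vectors in R^d are represented as functions nat => real, coordinates 0..d-1,
  with the product sigma-algebra on the extensional functions over {..<d}.\<close>

definition vec_space :: "nat \<Rightarrow> (nat \<Rightarrow> real) measure" where
  "vec_space d = PiM {..<d} (\<lambda>_. borel)"

definition sqdist :: "nat \<Rightarrow> (nat \<Rightarrow> real) \<Rightarrow> (nat \<Rightarrow> real) \<Rightarrow> real" where
  "sqdist d x y = (\<Sum>k<d. (x k - y k)^2)"

definition mean_vec :: "(nat \<Rightarrow> real) measure \<Rightarrow> nat \<Rightarrow> real" where
  "mean_vec F k = (\<integral>x. x k \<partial>F)"

definition trace_cov :: "nat \<Rightarrow> (nat \<Rightarrow> real) measure \<Rightarrow> real" where
  "trace_cov d F = (\<Sum>k<d. \<integral>x. (x k - mean_vec F k)^2 \<partial>F)"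

definition conv_in_prob :: "(nat \<Rightarrow> 'a measure) \<Rightarrow> (nat \<Rightarrow> 'a \<Rightarrow> real) \<Rightarrow> (nat \<Rightarrow> real) \<Rightarrow> bool" where
  "conv_in_prob M Y c \<longleftrightarrow>
     (\<forall>e>0. (\<lambda>d. measure (M d) {\<omega> \<in> space (M d). \<bar>Y d \<omega> - c d\<bar> > e}) \<longlonglongrightarrow> 0)"

definition vec_conv_in_prob ::
  "(nat \<Rightarrow> 'a measure) \<Rightarrow> nat \<Rightarrow> (nat \<Rightarrow> 'a \<Rightarrow> nat \<Rightarrow> real) \<Rightarrow> (nat \<Rightarrow> real) \<Rightarrow> bool" where
  "vec_conv_in_prob M J Y \<theta> \<longleftrightarrow>
     (\<forall>e>0. (\<lambda>d. measure (M d) {\<omega> \<in> space (M d). sqrt (\<Sum>k<J. (Y d \<omega> k - \<theta> k)^2) > e})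
        \<longlonglongrightarrow> 0)"

text \<open>Assumption (A1), stated on the laws F d j (d = dimension, j = class index < J),
  using independent X ~ F_j, Y, Z ~ F_j' realised on the product measure.\<close>
definition assumption_A1 :: "nat \<Rightarrow> (nat \<Rightarrow> nat \<Rightarrow> (nat \<Rightarrow> real) measure) \<Rightarrow> bool" where
  "assumption_A1 J F \<longleftrightarrow> (\<forall>j<J. \<forall>j'<J.
     conv_in_prob (\<lambda>d. F d j \<Otimes>\<^sub>M (F d j' \<Otimes>\<^sub>M F d j'))
       (\<lambda>d (x, y, z). (\<Sum>i<d. (x i - y i) * (x i - z i)) / real d)
       (\<lambda>d. \<integral>(x, y, z). (\<Sum>i<d. (x i - y i) * (x i - z i)) / real d
              \<partial>(F d j \<Otimes>\<^sub>M (F d j' \<Otimes>\<^sub>M F d j'))) \<and>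
     conv_in_prob (\<lambda>d. F d j \<Otimes>\<^sub>M F d j')
       (\<lambda>d (x, y). (\<Sum>i<d. (x i - y i)^2) / real d)
       (\<lambda>d. \<integral>(x, y). (\<Sum>i<d. (x i - y i)^2) / real d \<partial>(F d j \<Otimes>\<^sub>M F d j')))"

definition assumption_A2 ::
  "nat \<Rightarrow> (nat \<Rightarrow> nat \<Rightarrow> (nat \<Rightarrow> real) measure) \<Rightarrow> (nat \<Rightarrow> real) \<Rightarrow> (nat \<Rightarrow> nat \<Rightarrow> real) \<Rightarrow> bool" where
  "assumption_A2 J F \<sigma>2 \<nu>2 \<longleftrightarrow>
     (\<forall>j<J. (\<lambda>d. trace_cov d (F d j) / real d) \<longlonglongrightarrow> \<sigma>2 j) \<and>
     (\<forall>j<J. \<forall>k<J. j \<noteq> k \<longrightarrow>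
        (\<lambda>d. (\<Sum>i<d. (mean_vec (F d j) i - mean_vec (F d k) i)^2) / real d) \<longlonglongrightarrow> \<nu>2 j k)"

definition sample_mean :: "nat \<Rightarrow> (nat \<Rightarrow> 'a \<Rightarrow> nat \<Rightarrow> real) \<Rightarrow> 'a \<Rightarrow> nat \<Rightarrow> real" where
  "sample_mean nj Xj \<omega> = (\<lambda>k. (\<Sum>i<nj. Xj i \<omega> k) / real nj)"

definition Delta_hat ::
  "nat \<Rightarrow> (nat \<Rightarrow> nat) \<Rightarrow> (nat \<Rightarrow> nat \<Rightarrow> 'a \<Rightarrow> nat \<Rightarrow> real) \<Rightarrow> 'a \<Rightarrow> (nat \<Rightarrow> real) \<Rightarrow> nat \<Rightarrow> real" where
  "Delta_hat d n Xd \<omega> x = (\<lambda>k. sqdist d x (sample_mean (n k) (Xd k) \<omega>))"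

definition Theta :: "(nat \<Rightarrow> nat) \<Rightarrow> (nat \<Rightarrow> real) \<Rightarrow> (nat \<Rightarrow> nat \<Rightarrow> real) \<Rightarrow> nat \<Rightarrow> nat \<Rightarrow> real" where
  "Theta n \<sigma>2 \<nu>2 j k = (if k = j then (1 - 1 / real (n j)) * \<sigma>2 j
                         else \<nu>2 j k + \<sigma>2 j + \<sigma>2 k / real (n k))"

definition Theta_star :: "(nat \<Rightarrow> nat) \<Rightarrow> (nat \<Rightarrow> real) \<Rightarrow> (nat \<Rightarrow> nat \<Rightarrow> real) \<Rightarrow> nat \<Rightarrow> nat \<Rightarrow> real" where
  "Theta_star n \<sigma>2 \<nu>2 i k = (if k = i then (1 + 1 / real (n i)) * \<sigma>2 i
                              else \<nu>2 i k + \<sigma>2 i + \<sigma>2 k / real (n k))"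

end

theory Submission
  imports Defs
begin

(*
  Averaging the identity for the sample mean,
    |x - mean_a y_a|^2 = (1/m) sum_a |x - y_a|^2 - (1/(2 m^2)) sum_{a,b} |y_a - y_b|^2,
  reduces each coordinate of Delta_hat to squared distances between pairs of independent
  random vectors. For independent U ~ F_p and V ~ F_q the scaled distance |U - V|^2 / d has
  the law it has under F_p x F_q, so by (A1) it concentrates around its mean
  (tr Sigma_p + tr Sigma_q + |mu_p - mu_q|^2) / d, which by (A2) tends to
  sigma_p^2 + sigma_q^2 + nu_pq^2 (without nu_pq^2 when p = q). Convergence in probability
  to constants survives finite linear combinations, and the limits Theta_j and Theta_i^*
  come out by evaluating the two sums.
*)

section \<open>The sample-mean identity\<close>

lemma sq_diff_mean:
  fixes x :: real and y :: "nat \<Rightarrow> real"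
  assumes "m > 0"
  shows "(x - (\<Sum>a<m. y a) / real m)^2
    = (1 / real m) * (\<Sum>a<m. (x - y a)^2) - 1 / (2 * (real m)^2) * (\<Sum>a<m. \<Sum>b<m. (y a - y b)^2)"
proof -
  define S1 where "S1 = (\<Sum>a<m. y a)"
  define S2 where "S2 = (\<Sum>a<m. (y a)^2)"
  have expand: "(\<Sum>b<m. (z - y b)^2) = real m * z^2 - 2 * S1 * z + S2" for z
    unfolding S1_def S2_def
    by (simp add: power2_diff sum.distrib sum_subtractf sum_distrib_left mult_ac)
  have "(\<Sum>a<m. \<Sum>b<m. (y a - y b)^2) = (\<Sum>a<m. real m * (y a)^2 - 2 * S1 * y a + S2)"
    by (simp only: expand)
  also have "\<dots> = 2 * real m * S2 - 2 * S1 * S1"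
    by (simp add: sum.distrib sum_subtractf flip: sum_distrib_left S1_def S2_def)
  finally have double: "(\<Sum>a<m. \<Sum>b<m. (y a - y b)^2) = 2 * real m * S2 - 2 * S1 * S1" .
  show ?thesis
    unfolding expand[of x] double S1_def[symmetric] using assms by (simp add: field_simps power2_eq_square)
qed

lemma sqdist_sample_mean:
  assumes "m > 0"
  shows "sqdist d x (sample_mean m Y \<omega>)
    = (1 / real m) * (\<Sum>a<m. sqdist d x (Y a \<omega>))
      - 1 / (2 * (real m)^2) * (\<Sum>a<m. \<Sum>b<m. sqdist d (Y a \<omega>) (Y b \<omega>))"
proof -
  have "sqdist d x (sample_mean m Y \<omega>)
    = (1 / real m) * (\<Sum>k<d. \<Sum>a<m. (x k - Y a \<omega> k)^2)
      - 1 / (2 * (real m)^2) * (\<Sum>k<d. \<Sum>a<m. \<Sum>b<m. (Y a \<omega> k - Y b \<omega> k)^2)"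
    unfolding sqdist_def sample_mean_def sq_diff_mean[OF assms]
    by (simp add: sum_subtractf sum_distrib_left)
  then show ?thesis
    unfolding sqdist_def by (simp add: sum.swap[of _ "{..<d}"])
qed

lemma sum_lessThan_if_eq_zero:
  fixes c :: real
  assumes "i < m"
  shows "(\<Sum>a<m. if i = a then 0 else c) = (real m - 1) * c"
proof -
  have eq: "(\<lambda>a. if i = a then 0 else c) = (\<lambda>a. c - (if a = i then c else 0))"
    by auto
  show ?thesis
    unfolding eq using assms by (simp add: sum_subtractf algebra_simps)
qed

section \<open>Convergence in probability to a constant\<close>

text \<open>Unlike \<^const>\<open>conv_in_prob\<close>, this notion includes measurability of the random
  variables, without which deviation probabilities of sums could not be bounded.\<close>

definition rv_conv_in_prob :: "(nat \<Rightarrow> 'a measure) \<Rightarrow> (nat \<Rightarrow> 'a \<Rightarrow> real) \<Rightarrow> real \<Rightarrow> bool" where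
  "rv_conv_in_prob M Y c \<longleftrightarrow> (\<forall>d. Y d \<in> borel_measurable (M d)) \<and> conv_in_prob M Y (\<lambda>_. c)"

lemma rv_conv_in_prob_const: "rv_conv_in_prob M (\<lambda>d \<omega>. c) c"
  by (simp add: rv_conv_in_prob_def conv_in_prob_def)

lemma rv_conv_in_probD:
  assumes "rv_conv_in_prob M Y c" and "e > 0"
  shows "(\<lambda>d. measure (M d) {\<omega> \<in> space (M d). e < \<bar>Y d \<omega> - c\<bar>}) \<longlonglongrightarrow> 0"
  using assms by (simp add: rv_conv_in_prob_def conv_in_prob_def)

lemma rv_conv_in_prob_measurable: "rv_conv_in_prob M Y c \<Longrightarrow> Y d \<in> borel_measurable (M d)"
  by (simp add: rv_conv_in_prob_def)

lemma sets_Collect_deviation: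
  fixes Y :: "'a \<Rightarrow> real"
  assumes [measurable]: "Y \<in> borel_measurable N"
  shows "{\<omega> \<in> space N. e < \<bar>Y \<omega> - c\<bar>} \<in> sets N"
  by measurable

locale prob_space_sequence =
  fixes M :: "nat \<Rightarrow> 'a measure"
  assumes prob_space_M: "prob_space (M d)"
begin

lemma measure_tendsto_zero_mono:
  assumes "eventually (\<lambda>d. A d \<subseteq> B d) sequentially" and "\<And>d. B d \<in> sets (M d)"
    and "(\<lambda>d. measure (M d) (B d)) \<longlonglongrightarrow> 0"
  shows "(\<lambda>d. measure (M d) (A d)) \<longlonglongrightarrow> 0"
proof (rule tendsto_sandwich[OF _ _ tendsto_const assms(3)])
  show "eventually (\<lambda>d. measure (M d) (A d) \<le> measure (M d) (B d)) sequentially"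
    using assms(1)
  proof eventually_elim
    case (elim d)
    interpret prob_space "M d" by (rule prob_space_M)
    show ?case using elim assms(2) by (rule finite_measure_mono)
  qed
qed simp

lemma measure_Un_tendsto_zero:
  assumes "\<And>d. A d \<in> sets (M d)" and "\<And>d. B d \<in> sets (M d)"
    and "(\<lambda>d. measure (M d) (A d)) \<longlonglongrightarrow> 0" and "(\<lambda>d. measure (M d) (B d)) \<longlonglongrightarrow> 0"
  shows "(\<lambda>d. measure (M d) (A d \<union> B d)) \<longlonglongrightarrow> 0"
proof (rule tendsto_sandwich[OF _ _ tendsto_const tendsto_add_zero[OF assms(3,4)]])
  show "eventually (\<lambda>d. measure (M d) (A d \<union> B d) \<le> measure (M d) (A d) + measure (M d) (B d)) sequentially"
    using assms(1,2) by (intro always_eventually allI measure_Un_le)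
qed simp


lemma rv_conv_in_prob_add:
  assumes Y: "rv_conv_in_prob M Y c" and Y': "rv_conv_in_prob M Y' c'"
  shows "rv_conv_in_prob M (\<lambda>d \<omega>. Y d \<omega> + Y' d \<omega>) (c + c')"
  unfolding rv_conv_in_prob_def conv_in_prob_def
proof (intro conjI allI impI)
  show "(\<lambda>\<omega>. Y d \<omega> + Y' d \<omega>) \<in> borel_measurable (M d)" for d
    using Y Y' by (intro borel_measurable_add rv_conv_in_prob_measurable)
next
  fix e :: real assume "e > 0"
  define B where "B d = {\<omega> \<in> space (M d). e/2 < \<bar>Y d \<omega> - c\<bar>}" for d
  define B' where "B' d = {\<omega> \<in> space (M d). e/2 < \<bar>Y' d \<omega> - c'\<bar>}" for d
  have sets: "B d \<in> sets (M d)" "B' d \<in> sets (M d)" for d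
    unfolding B_def B'_def
    by (rule sets_Collect_deviation rv_conv_in_prob_measurable Y Y')+
  have lim: "(\<lambda>d. measure (M d) (B d \<union> B' d)) \<longlonglongrightarrow> 0"
    unfolding B_def B'_def using Y Y' \<open>e > 0\<close> sets[unfolded B_def B'_def]
    by (intro measure_Un_tendsto_zero rv_conv_in_probD) auto
  have "e/2 < \<bar>a - c\<bar> \<or> e/2 < \<bar>b - c'\<bar>" if "e < \<bar>a + b - (c + c')\<bar>" for a b :: real
  proof -
    have "\<bar>a + b - (c + c')\<bar> \<le> \<bar>a - c\<bar> + \<bar>b - c'\<bar>"
      using abs_triangle_ineq[of "a - c" "b - c'"] by (simp add: add_diff_add)
    with that show ?thesis by linarith
  qed
  then have subset: "{\<omega> \<in> space (M d). e < \<bar>Y d \<omega> + Y' d \<omega> - (c + c')\<bar>} \<subseteq> B d \<union> B' d" for d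
    unfolding B_def B'_def by blast
  show "(\<lambda>d. measure (M d) {\<omega> \<in> space (M d). e < \<bar>Y d \<omega> + Y' d \<omega> - (c + c')\<bar>}) \<longlonglongrightarrow> 0"
    by (rule measure_tendsto_zero_mono[OF always_eventually[OF allI[OF subset]] sets.Un[OF sets] lim])
qed

lemma rv_conv_in_prob_sum:
  assumes "finite I" and "\<And>a. a \<in> I \<Longrightarrow> rv_conv_in_prob M (Y a) (c a)"
  shows "rv_conv_in_prob M (\<lambda>d \<omega>. \<Sum>a\<in>I. Y a d \<omega>) (\<Sum>a\<in>I. c a)"
  using assms by (induction I rule: finite_induct) (auto intro: rv_conv_in_prob_const rv_conv_in_prob_add)

lemma rv_conv_in_prob_cmult:
  assumes "rv_conv_in_prob M Y c"
  shows "rv_conv_in_prob M (\<lambda>d \<omega>. r * Y d \<omega>) (r * c)"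
proof (cases "r = 0")
  case True
  then show ?thesis using rv_conv_in_prob_const[of M 0] by simp
next
  case False
  have "\<bar>r * Y d \<omega> - r * c\<bar> = \<bar>r\<bar> * \<bar>Y d \<omega> - c\<bar>" for d \<omega>
    by (simp flip: abs_mult right_diff_distrib)
  then have "{\<omega> \<in> space (M d). e < \<bar>r * Y d \<omega> - r * c\<bar>} = {\<omega> \<in> space (M d). e / \<bar>r\<bar> < \<bar>Y d \<omega> - c\<bar>}"
    for d e
    using False by (simp add: divide_less_eq mult.commute)
  moreover have "e / \<bar>r\<bar> > 0" if "e > 0" for e
    using that False by simp
  ultimately show ?thesis
    using assms unfolding rv_conv_in_prob_def conv_in_prob_def by (simp add: borel_measurable_times)
qed

lemma rv_conv_in_prob_abs_diff:
  assumes "rv_conv_in_prob M Y c"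
  shows "rv_conv_in_prob M (\<lambda>d \<omega>. \<bar>Y d \<omega> - c\<bar>) 0"
  using assms unfolding rv_conv_in_prob_def conv_in_prob_def
  by (auto intro!: borel_measurable_abs borel_measurable_diff)

lemma conv_in_prob_imp_rv_conv_in_prob:
  assumes "\<And>d. Y d \<in> borel_measurable (M d)" and "conv_in_prob M Y c" and "c \<longlonglongrightarrow> L"
  shows "rv_conv_in_prob M Y L"
  unfolding rv_conv_in_prob_def conv_in_prob_def
proof (intro conjI allI impI)
  fix e :: real assume "e > 0"
  then have "eventually (\<lambda>d. dist (c d) L < e/2) sequentially"
    using assms(3)[unfolded tendsto_iff] \<open>e > 0\<close> half_gt_zero by blast
  then have subset: "eventually (\<lambda>d. {\<omega> \<in> space (M d). e < \<bar>Y d \<omega> - L\<bar>}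
      \<subseteq> {\<omega> \<in> space (M d). e/2 < \<bar>Y d \<omega> - c d\<bar>}) sequentially"
  proof eventually_elim
    case (elim d)
    have "e/2 < \<bar>y - c d\<bar>" if "e < \<bar>y - L\<bar>" for y :: real
      using abs_triangle_ineq[of "y - c d" "c d - L"] elim that by (simp add: dist_real_def)
    then show ?case by blast
  qed
  have lim: "(\<lambda>d. measure (M d) {\<omega> \<in> space (M d). e/2 < \<bar>Y d \<omega> - c d\<bar>}) \<longlonglongrightarrow> 0"
    using assms(2) half_gt_zero[OF \<open>e > 0\<close>] unfolding conv_in_prob_def by blast
  show "(\<lambda>d. measure (M d) {\<omega> \<in> space (M d). e < \<bar>Y d \<omega> - L\<bar>}) \<longlonglongrightarrow> 0"
    by (rule measure_tendsto_zero_mono[OF subset sets_Collect_deviation[OF assms(1)] lim])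
qed (use assms in auto)

lemma vec_conv_in_probI:
  assumes "\<And>k. k < J \<Longrightarrow> rv_conv_in_prob M (\<lambda>d \<omega>. Y d \<omega> k) (\<theta> k)"
  shows "vec_conv_in_prob M J Y \<theta>"
  unfolding vec_conv_in_prob_def
proof (intro allI impI)
  fix e :: real assume "e > 0"
  have abs_sum: "rv_conv_in_prob M (\<lambda>d \<omega>. \<Sum>k<J. \<bar>Y d \<omega> k - \<theta> k\<bar>) 0"
    using rv_conv_in_prob_sum[of "{..<J}", OF _ rv_conv_in_prob_abs_diff] assms by simp
  have "sqrt (\<Sum>k<J. (Y d \<omega> k - \<theta> k)^2) \<le> (\<Sum>k<J. \<bar>Y d \<omega> k - \<theta> k\<bar>)" for d \<omega>
    using L2_set_le_sum_abs[of "\<lambda>k. Y d \<omega> k - \<theta> k" "{..<J}"] by (simp add: L2_set_def)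
  then have subset: "{\<omega> \<in> space (M d). e < sqrt (\<Sum>k<J. (Y d \<omega> k - \<theta> k)^2)}
      \<subseteq> {\<omega> \<in> space (M d). e < \<bar>(\<Sum>k<J. \<bar>Y d \<omega> k - \<theta> k\<bar>) - 0\<bar>}" for d
    by (auto intro: less_le_trans)
  show "(\<lambda>d. measure (M d) {\<omega> \<in> space (M d). sqrt (\<Sum>k<J. (Y d \<omega> k - \<theta> k)^2) > e}) \<longlonglongrightarrow> 0"
    by (rule measure_tendsto_zero_mono[OF always_eventually[OF allI[OF subset]]
          sets_Collect_deviation[OF rv_conv_in_prob_measurable[OF abs_sum]] rv_conv_in_probD[OF abs_sum \<open>e > 0\<close>]])
qed

lemma rv_conv_in_prob_sqdist_sample_mean:
  assumes "m > 0"
    and L: "\<And>a. a < m \<Longrightarrow> rv_conv_in_prob M (\<lambda>d \<omega>. sqdist d (x d \<omega>) (Y d a \<omega>) / real d) (L a)"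
    and Q: "\<And>a b. a < m \<Longrightarrow> b < m \<Longrightarrow>
      rv_conv_in_prob M (\<lambda>d \<omega>. sqdist d (Y d a \<omega>) (Y d b \<omega>) / real d) (Q a b)"
  shows "rv_conv_in_prob M (\<lambda>d \<omega>. sqdist d (x d \<omega>) (sample_mean m (Y d) \<omega>) / real d)
    ((1 / real m) * (\<Sum>a<m. L a) - 1 / (2 * (real m)^2) * (\<Sum>a<m. \<Sum>b<m. Q a b))"
proof -
  have "rv_conv_in_prob M (\<lambda>d \<omega>. (1 / real m) * (\<Sum>a<m. sqdist d (x d \<omega>) (Y d a \<omega>) / real d)
      + (- 1 / (2 * (real m)^2)) * (\<Sum>a<m. \<Sum>b<m. sqdist d (Y d a \<omega>) (Y d b \<omega>) / real d))
    ((1 / real m) * (\<Sum>a<m. L a) + (- 1 / (2 * (real m)^2)) * (\<Sum>a<m. \<Sum>b<m. Q a b))"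
    using L Q by (intro rv_conv_in_prob_add rv_conv_in_prob_cmult rv_conv_in_prob_sum) auto
  then show ?thesis
    by (simp add: sqdist_sample_mean[OF \<open>m > 0\<close>] sum_divide_distrib[symmetric] diff_divide_distrib)
qed

end

section \<open>Squared distances between independent random vectors\<close>

lemma vec_space_component_measurable [measurable]:
  "k < d \<Longrightarrow> (\<lambda>x. x k) \<in> borel_measurable (vec_space d)"
  unfolding vec_space_def by (rule measurable_component_singleton) simp

lemma sqdist_measurable [measurable]:
  "(\<lambda>(x, y). sqdist d x y) \<in> borel_measurable (vec_space d \<Otimes>\<^sub>M vec_space d)"
  unfolding sqdist_def by measurable

lemma (in prob_space) expectation_sq_diff_indep:
  fixes a b :: "'a \<Rightarrow> real"
  assumes ind: "indep_var borel a borel b"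
    and a2: "integrable M (\<lambda>\<omega>. (a \<omega>)^2)" and b2: "integrable M (\<lambda>\<omega>. (b \<omega>)^2)"
  shows "integrable M (\<lambda>\<omega>. (a \<omega> - b \<omega>)^2)"
    and "expectation (\<lambda>\<omega>. (a \<omega> - b \<omega>)^2)
      = variance a + variance b + (expectation a - expectation b)^2"
proof -
  have a1: "integrable M a"
    using square_integrable_imp_integrable[OF indep_var_rv1[OF ind] a2] .
  have b1: "integrable M b"
    using square_integrable_imp_integrable[OF indep_var_rv2[OF ind] b2] .
  have ab: "integrable M (\<lambda>\<omega>. a \<omega> * b \<omega>)"
    by (rule indep_var_integrable[OF ind a1 b1])
  have sq: "(\<lambda>\<omega>. (a \<omega> - b \<omega>)^2) = (\<lambda>\<omega>. (a \<omega>)^2 + (b \<omega>)^2 - 2 * (a \<omega> * b \<omega>))"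
    by (simp add: fun_eq_iff power2_diff)
  show "integrable M (\<lambda>\<omega>. (a \<omega> - b \<omega>)^2)"
    unfolding sq using a2 b2 ab by auto
  have "expectation (\<lambda>\<omega>. (a \<omega> - b \<omega>)^2)
      = expectation (\<lambda>\<omega>. (a \<omega>)^2) + expectation (\<lambda>\<omega>. (b \<omega>)^2) - 2 * (expectation a * expectation b)"
    unfolding sq using a2 b2 ab by (simp add: indep_var_lebesgue_integral[OF ind a1 b1])
  then show "expectation (\<lambda>\<omega>. (a \<omega> - b \<omega>)^2)
      = variance a + variance b + (expectation a - expectation b)^2"
    using variance_eq[OF a1 a2] variance_eq[OF b1 b2] by (simp add: power2_diff)
qed

lemma (in prob_space) expectation_sqdist_indep:
  assumes ind: "indep_var (vec_space d) A (vec_space d) B"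
    and A2: "\<And>k. k < d \<Longrightarrow> integrable (distr M (vec_space d) A) (\<lambda>x. (x k)^2)"
    and B2: "\<And>k. k < d \<Longrightarrow> integrable (distr M (vec_space d) B) (\<lambda>x. (x k)^2)"
  shows "expectation (\<lambda>\<omega>. sqdist d (A \<omega>) (B \<omega>))
    = trace_cov d (distr M (vec_space d) A) + trace_cov d (distr M (vec_space d) B)
      + (\<Sum>k<d. (mean_vec (distr M (vec_space d) A) k - mean_vec (distr M (vec_space d) B) k)^2)"
proof -
  let ?FA = "distr M (vec_space d) A" and ?FB = "distr M (vec_space d) B"
  have A: "random_variable (vec_space d) A" and B: "random_variable (vec_space d) B"
    using indep_var_rv1[OF ind] indep_var_rv2[OF ind] .
  have coord: "integrable M (\<lambda>\<omega>. (A \<omega> k - B \<omega> k)^2)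
      \<and> expectation (\<lambda>\<omega>. (A \<omega> k - B \<omega> k)^2)
        = (\<integral>x. (x k - mean_vec ?FA k)^2 \<partial>?FA) + (\<integral>x. (x k - mean_vec ?FB k)^2 \<partial>?FB)
          + (mean_vec ?FA k - mean_vec ?FB k)^2" if "k < d" for k
  proof -
    note coord_meas = vec_space_component_measurable[OF that]
    have ind_k: "indep_var borel (\<lambda>\<omega>. A \<omega> k) borel (\<lambda>\<omega>. B \<omega> k)"
      using indep_var_compose[OF ind coord_meas coord_meas] by (simp add: comp_def)
    have sq_int: "integrable M (\<lambda>\<omega>. (A \<omega> k)^2)" "integrable M (\<lambda>\<omega>. (B \<omega> k)^2)"
      using A2[OF that] B2[OF that] coord_meas
      by (simp_all add: integrable_distr_eq[OF A] integrable_distr_eq[OF B])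
    note diff = expectation_sq_diff_indep[OF ind_k sq_int]
    have law_A: "(\<integral>\<omega>. f (A \<omega>) \<partial>M) = integral\<^sup>L ?FA f"
      and law_B: "(\<integral>\<omega>. f (B \<omega>) \<partial>M) = integral\<^sup>L ?FB f"
      if "f \<in> borel_measurable (vec_space d)" for f :: "_ \<Rightarrow> real"
      using integral_distr[OF A that] integral_distr[OF B that] by simp_all
    have sq_meas: "(\<lambda>x. (x k - c)^2) \<in> borel_measurable (vec_space d)" for c
      using that by measurable
    show ?thesis
      using diff law_A[OF coord_meas] law_B[OF coord_meas] law_A[OF sq_meas] law_B[OF sq_meas]
      by (simp add: mean_vec_def)
  qed
  have "expectation (\<lambda>\<omega>. sqdist d (A \<omega>) (B \<omega>)) = (\<Sum>k<d. expectation (\<lambda>\<omega>. (A \<omega> k - B \<omega> k)^2))"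
    unfolding sqdist_def using coord by (simp add: integral_sum)
  also have "\<dots> = trace_cov d ?FA + trace_cov d ?FB + (\<Sum>k<d. (mean_vec ?FA k - mean_vec ?FB k)^2)"
    using coord by (simp add: trace_cov_def sum.distrib)
  finally show ?thesis .
qed

lemma (in prob_space) prob_deviation_indep_pair:
  fixes G :: "'b \<times> 'b \<Rightarrow> real"
  assumes ind: "indep_var N A N' B" and G: "G \<in> borel_measurable (N \<Otimes>\<^sub>M N')"
  shows "prob {\<omega> \<in> space M. e < \<bar>G (A \<omega>, B \<omega>) - c\<bar>}
    = measure (distr M N A \<Otimes>\<^sub>M distr M N' B) {z \<in> space (N \<Otimes>\<^sub>M N'). e < \<bar>G z - c\<bar>}"
proof -
  have AB: "(\<lambda>\<omega>. (A \<omega>, B \<omega>)) \<in> measurable M (N \<Otimes>\<^sub>M N')"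
    using indep_var_rv1[OF ind] indep_var_rv2[OF ind] by (rule measurable_Pair)
  have "distr M N A \<Otimes>\<^sub>M distr M N' B = distr M (N \<Otimes>\<^sub>M N') (\<lambda>\<omega>. (A \<omega>, B \<omega>))"
    using ind by (simp add: indep_var_distribution_eq)
  then show ?thesis
    using measure_distr[OF AB sets_Collect_deviation[OF G]] measurable_space[OF AB]
    by (auto intro!: arg_cong[where f = prob])
qed

lemma (in prob_space) integral_indep_pair:
  fixes G :: "'b \<times> 'b \<Rightarrow> real"
  assumes ind: "indep_var N A N' B" and G: "G \<in> borel_measurable (N \<Otimes>\<^sub>M N')"
  shows "integral\<^sup>L (distr M N A \<Otimes>\<^sub>M distr M N' B) G = expectation (\<lambda>\<omega>. G (A \<omega>, B \<omega>))"
proof -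
  have AB: "(\<lambda>\<omega>. (A \<omega>, B \<omega>)) \<in> measurable M (N \<Otimes>\<^sub>M N')"
    using indep_var_rv1[OF ind] indep_var_rv2[OF ind] by (rule measurable_Pair)
  have "distr M N A \<Otimes>\<^sub>M distr M N' B = distr M (N \<Otimes>\<^sub>M N') (\<lambda>\<omega>. (A \<omega>, B \<omega>))"
    using ind by (simp add: indep_var_distribution_eq)
  then show ?thesis
    using integral_distr[OF AB G] by simp
qed

lemma (in prob_space) integral_sqdist_indep_laws:
  assumes ind: "indep_var (vec_space d) A (vec_space d) B"
    and "\<And>k. k < d \<Longrightarrow> integrable (distr M (vec_space d) A) (\<lambda>x. (x k)^2)"
    and "\<And>k. k < d \<Longrightarrow> integrable (distr M (vec_space d) B) (\<lambda>x. (x k)^2)"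
  shows "(\<integral>(x, y). sqdist d x y \<partial>(distr M (vec_space d) A \<Otimes>\<^sub>M distr M (vec_space d) B))
    = trace_cov d (distr M (vec_space d) A) + trace_cov d (distr M (vec_space d) B)
      + (\<Sum>k<d. (mean_vec (distr M (vec_space d) A) k - mean_vec (distr M (vec_space d) B) k)^2)"
  using integral_indep_pair[OF ind sqdist_measurable] expectation_sqdist_indep[OF assms] by simp

lemma (in prob_space) indep_var_of_indep_vars:
  assumes ind: "indep_vars (\<lambda>_. N) Y I" and "a \<in> I" "b \<in> I" "a \<noteq> b"
  shows "indep_var N (Y a) N (Y b)"
proof -
  have "indep_var (PiM {a} (\<lambda>_. N)) (\<lambda>\<omega>. restrict (\<lambda>i. Y i \<omega>) {a})
      (PiM {b} (\<lambda>_. N)) (\<lambda>\<omega>. restrict (\<lambda>i. Y i \<omega>) {b})"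
    using assms by (intro indep_var_restrict[OF ind]) auto
  then have "indep_var N ((\<lambda>f. f a) \<circ> (\<lambda>\<omega>. restrict (\<lambda>i. Y i \<omega>) {a}))
      N ((\<lambda>f. f b) \<circ> (\<lambda>\<omega>. restrict (\<lambda>i. Y i \<omega>) {b}))"
    by (rule indep_var_compose) (auto intro: measurable_component_singleton)
  then show ?thesis by (simp add: comp_def)
qed

context prob_space_sequence
begin

lemma sqdist_indep_rv_conv_in_prob:
  fixes F :: "nat \<Rightarrow> nat \<Rightarrow> (nat \<Rightarrow> real) measure"
  assumes "p < J" "q < J"
    and A: "\<And>d. A d \<in> measurable (M d) (vec_space d)" "\<And>d. distr (M d) (vec_space d) (A d) = F d p"
    and B: "\<And>d. B d \<in> measurable (M d) (vec_space d)" "\<And>d. distr (M d) (vec_space d) (B d) = F d q"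
    and ind: "\<And>d. prob_space.indep_var (M d) (vec_space d) (A d) (vec_space d) (B d)"
    and sq_int: "\<And>d j k. j < J \<Longrightarrow> k < d \<Longrightarrow> integrable (F d j) (\<lambda>x. (x k)^2)"
    and A1: "assumption_A1 J F" and A2: "assumption_A2 J F \<sigma>2 \<nu>2"
  shows "rv_conv_in_prob M (\<lambda>d \<omega>. sqdist d (A d \<omega>) (B d \<omega>) / real d)
    (\<sigma>2 p + \<sigma>2 q + (if p = q then 0 else \<nu>2 p q))"
proof (rule conv_in_prob_imp_rv_conv_in_prob)
  define G where "G d = (\<lambda>(x, y). sqdist d x y / real d)" for d
  define c where "c d = integral\<^sup>L (F d p \<Otimes>\<^sub>M F d q) (G d)" for d
  have G_meas: "G d \<in> borel_measurable (vec_space d \<Otimes>\<^sub>M vec_space d)" for d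
    unfolding G_def by measurable
  show "(\<lambda>\<omega>. sqdist d (A d \<omega>) (B d \<omega>) / real d) \<in> borel_measurable (M d)" for d
    using measurable_compose[OF measurable_Pair[OF A(1) B(1)] G_meas] by (simp add: G_def)
  have space_F: "space (F d p \<Otimes>\<^sub>M F d q) = space (vec_space d \<Otimes>\<^sub>M vec_space d)" for d
    by (simp add: space_pair_measure flip: A(2) B(2))
  have "conv_in_prob (\<lambda>d. F d p \<Otimes>\<^sub>M F d q) G c"
    using A1 \<open>p < J\<close> \<open>q < J\<close> unfolding assumption_A1_def G_def c_def sqdist_def by blast
  moreover have "measure (M d) {\<omega> \<in> space (M d). e < \<bar>G d (A d \<omega>, B d \<omega>) - c d\<bar>}
      = measure (F d p \<Otimes>\<^sub>M F d q) {z \<in> space (F d p \<Otimes>\<^sub>M F d q). e < \<bar>G d z - c d\<bar>}" for d e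
  proof -
    interpret prob_space "M d" by (rule prob_space_M)
    show ?thesis
      using prob_deviation_indep_pair[OF ind G_meas] by (simp add: A(2) B(2) space_F)
  qed
  ultimately show "conv_in_prob M (\<lambda>d \<omega>. sqdist d (A d \<omega>) (B d \<omega>) / real d) c"
    by (simp add: conv_in_prob_def G_def)
  have c_eq: "c d = trace_cov d (F d p) / real d + trace_cov d (F d q) / real d
      + (\<Sum>k<d. (mean_vec (F d p) k - mean_vec (F d q) k)^2) / real d" for d
  proof -
    interpret prob_space "M d" by (rule prob_space_M)
    have "G d = (\<lambda>z. (\<lambda>(x, y). sqdist d x y) z / real d)"
      by (auto simp: G_def)
    then have "c d = (\<integral>(x, y). sqdist d x y \<partial>(F d p \<Otimes>\<^sub>M F d q)) / real d"
      by (simp only: c_def integral_divide_zero)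
    then show ?thesis
      using integral_sqdist_indep_laws[OF ind] sq_int \<open>p < J\<close> \<open>q < J\<close>
      by (simp add: A(2) B(2) add_divide_distrib)
  qed
  have "(\<lambda>d. trace_cov d (F d p) / real d) \<longlonglongrightarrow> \<sigma>2 p"
    and "(\<lambda>d. trace_cov d (F d q) / real d) \<longlonglongrightarrow> \<sigma>2 q"
    and "(\<lambda>d. (\<Sum>k<d. (mean_vec (F d p) k - mean_vec (F d q) k)^2) / real d)
      \<longlonglongrightarrow> (if p = q then 0 else \<nu>2 p q)"
    using A2 \<open>p < J\<close> \<open>q < J\<close> unfolding assumption_A2_def by auto
  then show "c \<longlonglongrightarrow> \<sigma>2 p + \<sigma>2 q + (if p = q then 0 else \<nu>2 p q)"
    unfolding c_eq by (intro tendsto_add)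
qed

end

section \<open>The empirical distance vector\<close>

locale high_dim_samples = prob_space_sequence M
  for M :: "nat \<Rightarrow> 'a measure" +
  fixes J :: nat and n :: "nat \<Rightarrow> nat"
    and F :: "nat \<Rightarrow> nat \<Rightarrow> (nat \<Rightarrow> real) measure"
    and X :: "nat \<Rightarrow> nat \<Rightarrow> nat \<Rightarrow> 'a \<Rightarrow> (nat \<Rightarrow> real)"
    and \<sigma>2 :: "nat \<Rightarrow> real" and \<nu>2 :: "nat \<Rightarrow> nat \<Rightarrow> real"
  assumes n_pos: "\<And>j. j < J \<Longrightarrow> 0 < n j"
    and sq_int: "\<And>d j k. j < J \<Longrightarrow> k < d \<Longrightarrow> integrable (F d j) (\<lambda>x. (x k)^2)"
    and X_rv: "\<And>d j i. j < J \<Longrightarrow> i < n j \<Longrightarrow> X d j i \<in> measurable (M d) (vec_space d)"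
    and X_distr: "\<And>d j i. j < J \<Longrightarrow> i < n j \<Longrightarrow> distr (M d) (vec_space d) (X d j i) = F d j"
    and X_indep: "\<And>d. prob_space.indep_vars (M d) (\<lambda>_. vec_space d) (\<lambda>(j, i). X d j i)
      {(j, i). j < J \<and> i < n j}"
    and A1: "assumption_A1 J F" and A2: "assumption_A2 J F \<sigma>2 \<nu>2"
begin

lemma sqdist_sample_points_rv_conv_in_prob:
  assumes "j < J" "i < n j" "k < J" "a < n k"
  shows "rv_conv_in_prob M (\<lambda>d \<omega>. sqdist d (X d j i \<omega>) (X d k a \<omega>) / real d)
    (if (j, i) = (k, a) then 0 else \<sigma>2 j + \<sigma>2 k + (if j = k then 0 else \<nu>2 j k))"
proof (cases "(j, i) = (k, a)")
  case True
  then show ?thesis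
    using rv_conv_in_prob_const[of M 0] by (simp add: sqdist_def)
next
  case False
  have ind: "prob_space.indep_var (M d) (vec_space d) (X d j i) (vec_space d) (X d k a)" for d
  proof -
    interpret prob_space "M d" by (rule prob_space_M)
    show ?thesis
      using indep_var_of_indep_vars[OF X_indep, of "(j, i)" "(k, a)"] assms False by simp
  qed
  show ?thesis
    unfolding if_not_P[OF False]
    by (rule sqdist_indep_rv_conv_in_prob[OF \<open>j < J\<close> \<open>k < J\<close> X_rv[OF assms(1,2)] X_distr[OF assms(1,2)]
          X_rv[OF assms(3,4)] X_distr[OF assms(3,4)] ind sq_int A1 A2])
qed

lemma Delta_hat_vec_conv_in_prob:
  assumes L: "\<And>k a. k < J \<Longrightarrow> a < n k \<Longrightarrow>
      rv_conv_in_prob M (\<lambda>d \<omega>. sqdist d (x d \<omega>) (X d k a \<omega>) / real d) (L k a)"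
    and \<theta>: "\<And>k. k < J \<Longrightarrow> \<theta> k = (\<Sum>a<n k. L k a) / real (n k) - (1 - 1 / real (n k)) * \<sigma>2 k"
  shows "vec_conv_in_prob M J (\<lambda>d \<omega> k. Delta_hat d n (X d) \<omega> (x d \<omega>) k / real d) \<theta>"
proof (rule vec_conv_in_probI)
  fix k assume k: "k < J"
  have Q: "rv_conv_in_prob M (\<lambda>d \<omega>. sqdist d (X d k a \<omega>) (X d k b \<omega>) / real d)
      (if a = b then 0 else \<sigma>2 k + \<sigma>2 k)" if "a < n k" "b < n k" for a b
    using sqdist_sample_points_rv_conv_in_prob[OF k that(1) k that(2)] by (simp split: if_splits)
  have offdiag: "(\<Sum>a<n k. \<Sum>b<n k. if a = b then 0 else \<sigma>2 k + \<sigma>2 k)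
      = real (n k) * ((real (n k) - 1) * (\<sigma>2 k + \<sigma>2 k))"
    by (simp add: sum_lessThan_if_eq_zero)
  have lim_eq: "(1 / real (n k)) * (\<Sum>a<n k. L k a)
      - 1 / (2 * (real (n k))^2) * (\<Sum>a<n k. \<Sum>b<n k. if a = b then 0 else \<sigma>2 k + \<sigma>2 k) = \<theta> k"
    unfolding offdiag using n_pos[OF k] by (simp add: \<theta>[OF k] field_simps power2_eq_square)
  show "rv_conv_in_prob M (\<lambda>d \<omega>. Delta_hat d n (X d) \<omega> (x d \<omega>) k / real d) (\<theta> k)"
    using rv_conv_in_prob_sqdist_sample_mean[where Y = "\<lambda>d. X d k", OF n_pos[OF k] L[OF k] Q]
    unfolding lim_eq by (simp add: Delta_hat_def)
qed

lemma Delta_hat_sample_point_vec_conv_in_prob: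
  assumes "j < J" "i < n j"
  shows "vec_conv_in_prob M J (\<lambda>d \<omega> k. Delta_hat d n (X d) \<omega> (X d j i \<omega>) k / real d)
    (Theta n \<sigma>2 \<nu>2 j)"
proof (rule Delta_hat_vec_conv_in_prob[OF sqdist_sample_points_rv_conv_in_prob[OF assms]])
  fix k assume "k < J"
  show "Theta n \<sigma>2 \<nu>2 j k
    = (\<Sum>a<n k. if (j, i) = (k, a) then 0 else \<sigma>2 j + \<sigma>2 k + (if j = k then 0 else \<nu>2 j k))
        / real (n k) - (1 - 1 / real (n k)) * \<sigma>2 k"
  proof (cases "k = j")
    case True
    then show ?thesis
      using assms n_pos[OF \<open>k < J\<close>]
      by (simp add: Theta_def sum_lessThan_if_eq_zero field_simps)
  next
    case False
    then show ?thesis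
      using n_pos[OF \<open>k < J\<close>] by (simp add: Theta_def field_simps)
  qed
qed

lemma Delta_hat_new_point_vec_conv_in_prob:
  assumes "l < J"
    and Z_rv: "\<And>d. Z d \<in> measurable (M d) (vec_space d)"
    and Z_distr: "\<And>d. distr (M d) (vec_space d) (Z d) = F d l"
    and Z_indep: "\<And>d. prob_space.indep_vars (M d) (\<lambda>_. vec_space d)
      (\<lambda>idx. case idx of None \<Rightarrow> Z d | Some (j, i) \<Rightarrow> X d j i)
      (insert None (Some ` {(j, i). j < J \<and> i < n j}))"
  shows "vec_conv_in_prob M J (\<lambda>d \<omega> k. Delta_hat d n (X d) \<omega> (Z d \<omega>) k / real d)
    (Theta_star n \<sigma>2 \<nu>2 l)"
proof (rule Delta_hat_vec_conv_in_prob)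
  fix k a assume "k < J" "a < n k"
  have ind: "prob_space.indep_var (M d) (vec_space d) (Z d) (vec_space d) (X d k a)" for d
  proof -
    interpret prob_space "M d" by (rule prob_space_M)
    show ?thesis
      using indep_var_of_indep_vars[OF Z_indep, of None "Some (k, a)"] \<open>k < J\<close> \<open>a < n k\<close> by simp
  qed
  show "rv_conv_in_prob M (\<lambda>d \<omega>. sqdist d (Z d \<omega>) (X d k a \<omega>) / real d)
      (\<sigma>2 l + \<sigma>2 k + (if l = k then 0 else \<nu>2 l k))"
    by (rule sqdist_indep_rv_conv_in_prob[OF \<open>l < J\<close> \<open>k < J\<close> Z_rv Z_distr
          X_rv[OF \<open>k < J\<close> \<open>a < n k\<close>] X_distr[OF \<open>k < J\<close> \<open>a < n k\<close>] ind sq_int A1 A2])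
next
  fix k assume "k < J"
  then show "Theta_star n \<sigma>2 \<nu>2 l k = (\<Sum>a<n k. \<sigma>2 l + \<sigma>2 k + (if l = k then 0 else \<nu>2 l k))
      / real (n k) - (1 - 1 / real (n k)) * \<sigma>2 k"
    using n_pos[OF \<open>k < J\<close>] by (simp add: Theta_star_def field_simps)
qed

end

theorem theorem3:
  fixes J :: nat and n :: "nat \<Rightarrow> nat"
    and M :: "nat \<Rightarrow> 'a measure"
    and F :: "nat \<Rightarrow> nat \<Rightarrow> (nat \<Rightarrow> real) measure"
    and X :: "nat \<Rightarrow> nat \<Rightarrow> nat \<Rightarrow> 'a \<Rightarrow> (nat \<Rightarrow> real)"
    and \<sigma>2 :: "nat \<Rightarrow> real" and \<nu>2 :: "nat \<Rightarrow> nat \<Rightarrow> real"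
  assumes J: "J \<ge> 2"
    and n: "\<forall>j<J. n j \<ge> 2"
    and M: "\<forall>d. prob_space (M d)"
    and Fmom: "\<forall>d. \<forall>j<J. \<forall>k<d. integrable (F d j) (\<lambda>x. (x k)^2)"
    and Xdist: "\<forall>d. \<forall>j<J. \<forall>i<n j. X d j i \<in> measurable (M d) (vec_space d)
                   \<and> distr (M d) (vec_space d) (X d j i) = F d j"
    and Xindep: "\<forall>d. prob_space.indep_vars (M d) (\<lambda>_. vec_space d) (\<lambda>(j, i). X d j i)
                   {(j, i). j < J \<and> i < n j}"
    and A1: "assumption_A1 J F"
    and A2: "assumption_A2 J F \<sigma>2 \<nu>2"
  shows "(\<forall>j<J. \<forall>i<n j.
            vec_conv_in_prob M J (\<lambda>d \<omega> k. Delta_hat d n (X d) \<omega> (X d j i \<omega>) k / real d)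
              (Theta n \<sigma>2 \<nu>2 j))
       \<and> (\<forall>(Z :: nat \<Rightarrow> 'a \<Rightarrow> (nat \<Rightarrow> real)) l.
            l < J
            \<longrightarrow> (\<forall>d. Z d \<in> measurable (M d) (vec_space d)
                     \<and> distr (M d) (vec_space d) (Z d) = F d l)
            \<longrightarrow> (\<forall>d. prob_space.indep_vars (M d) (\<lambda>_. vec_space d)
                     (\<lambda>idx. case idx of None \<Rightarrow> Z d | Some (j, i) \<Rightarrow> X d j i)
                     (insert None (Some ` {(j, i). j < J \<and> i < n j})))
            \<longrightarrow> vec_conv_in_prob M J (\<lambda>d \<omega> k. Delta_hat d n (X d) \<omega> (Z d \<omega>) k / real d)
                  (Theta_star n \<sigma>2 \<nu>2 l))"
proof -
  have n_pos: "\<And>j. j < J \<Longrightarrow> 0 < n j"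
    using n by fastforce
  interpret high_dim_samples M J n F X \<sigma>2 \<nu>2
    using M n_pos Fmom Xdist Xindep A1 A2
    by (intro high_dim_samples.intro prob_space_sequence.intro high_dim_samples_axioms.intro) simp_all
  show ?thesis
    using Delta_hat_sample_point_vec_conv_in_prob Delta_hat_new_point_vec_conv_in_prob by simp
qed

end
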